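(* Let $X$ be a finite nonempty set, $\mathcal F$ a family of subsets of $X$ whose union is $X$, with fractional covering number $\tau^*:=\tau^*(X,\mathcal F)$, and let $k$ be a positive integer. Then \[\tau_k(\mathcal F)\le\left\lceil\tau^*\left(k+\tfrac32\ln|X|+\tfrac32\sqrt{(4k+\ln|X|)\ln|X|}\right)\right\rceil\le\left\lceil 6\tau^*\max\{\ln|X|,k\}\right\rceil.\]
   Context: The $k$-fold covering number $\tau_k(\mathcal F)$ is the minimum cardinality of a multi-subfamily of $\mathcal F$ such that each point of $X$ is contained in at least $k$ members of the subfamily (counted with multiplicity). A fractional covering of $X$ by $\mathcal F$ is a map $w:\mathcal F\to[0,\infty)$ with $\sum_{F\in\mathcal F,\,x\in F}w(F)\ge1$ for all $x\in X$; the fractional covering number $\tau^*(X,\mathcal F)$ is the infimum of $\sum_{F\in\mathcal F}w(F)$ over all fractional coverings $w$. *)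

theory Defs
  imports "HOL-Analysis.Analysis" "HOL-Library.Multiset"
begin

definition is_k_fold_cover :: "nat \<Rightarrow> 'a set \<Rightarrow> 'a set set \<Rightarrow> 'a set multiset \<Rightarrow> bool" where
  "is_k_fold_cover k X F M \<longleftrightarrow>
     set_mset M \<subseteq> F \<and> (\<forall>x\<in>X. k \<le> size (filter_mset (\<lambda>A. x \<in> A) M))"

definition k_fold_covering_number :: "nat \<Rightarrow> 'a set \<Rightarrow> 'a set set \<Rightarrow> nat" where
  "k_fold_covering_number k X F = (LEAST n. \<exists>M. is_k_fold_cover k X F M \<and> size M = n)"

definition is_fractional_cover :: "'a set \<Rightarrow> 'a set set \<Rightarrow> ('a set \<Rightarrow> real) \<Rightarrow> bool" where
  "is_fractional_cover X F w \<longleftrightarrow>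
     (\<forall>A\<in>F. 0 \<le> w A) \<and> (\<forall>x\<in>X. 1 \<le> (\<Sum>A\<in>{A\<in>F. x \<in> A}. w A))"

definition fractional_covering_number :: "'a set \<Rightarrow> 'a set set \<Rightarrow> real" where
  "fractional_covering_number X F = Inf {(\<Sum>A\<in>F. w A) | w. is_fractional_cover X F w}"

end

theory Submission
  imports Defs
begin

text \<open>Greedy covering with a multiplicative potential. For a multiset M of sets and
\<open>0 < \<lambda> < 1\<close> consider \<open>\<Phi>(M) = \<Sum>\<^sub>x \<lambda>^(number of members of M containing x)\<close>.
Averaging over a fractional cover w of total weight T close to \<open>\<tau>\<^sup>*\<close> shows that some member A of F
satisfies \<open>\<Phi>(M + A) \<le> (1 - (1 - \<lambda>)/T) \<Phi>(M)\<close>, so N greedy steps give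
\<open>\<Phi> \<le> |X| exp(-(1 - \<lambda>) N / T)\<close>. A point covered fewer than k times contributes at least
\<open>\<lambda>^(k-1)\<close>, hence N greedy sets form a k-fold cover as soon as
\<open>ln |X| - (k - 1) ln \<lambda> < (1 - \<lambda>) N / T\<close>. The choice \<open>\<lambda> = sqrt (k / c)\<close> with
\<open>c \<ge> (sqrt k + sqrt (ln |X|))\<^sup>2\<close> makes this hold for \<open>N = \<lceil>\<tau>\<^sup>* c\<rceil>\<close>.\<close>

definition cover_count :: "'a \<Rightarrow> 'a set multiset \<Rightarrow> nat" where
  "cover_count x M = size (filter_mset (\<lambda>A. x \<in> A) M)"

lemma cover_count_add_mset:
  "cover_count x (add_mset A M) = (if x \<in> A then Suc (cover_count x M) else cover_count x M)"
  by (simp add: cover_count_def)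

lemma k_fold_covering_number_le:
  "is_k_fold_cover k X F M \<Longrightarrow> k_fold_covering_number k X F \<le> size M"
  unfolding k_fold_covering_number_def by (rule Least_le) blast

lemma k_fold_covering_number_le_of_superset_member:
  assumes "A \<in> F" and "X \<subseteq> A"
  shows "k_fold_covering_number k X F \<le> k"
proof -
  have "filter_mset (\<lambda>B. x \<in> B) (replicate_mset k A) = replicate_mset k A" if "x \<in> A" for x
    using that by (induction k) auto
  then have "is_k_fold_cover k X F (replicate_mset k A)"
    using assms by (auto simp: is_k_fold_cover_def)
  then show ?thesis
    using k_fold_covering_number_le by fastforce
qed

lemma exists_le_weighted_average:
  fixes w g :: "'b \<Rightarrow> real"
  assumes "finite F" and "\<forall>A\<in>F. 0 \<le> w A" and "0 < sum w F"
    and "(\<Sum>A\<in>F. w A * g A) \<le> sum w F * B"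
  shows "\<exists>A\<in>F. g A \<le> B"
proof (rule ccontr)
  assume "\<not> ?thesis"
  then have gt: "\<forall>A\<in>F. B < g A" by auto
  obtain A0 where A0: "A0 \<in> F" "0 < w A0"
    using assms(2,3) sum_nonpos[of F w] by (meson not_le)
  have "0 < (\<Sum>A\<in>F. w A * (g A - B))"
    using assms(1,2) A0 gt by (intro sum_pos2[OF assms(1) A0(1)]) auto
  also have "\<dots> = (\<Sum>A\<in>F. w A * g A) - sum w F * B"
    by (simp add: algebra_simps sum_subtractf sum_distrib_left)
  finally show False
    using assms(4) by simp
qed

lemma fractional_cover_total_weight_ge_1:
  assumes "finite F" and "is_fractional_cover X F w" and "X \<noteq> {}"
  shows "1 \<le> sum w F"
proof -
  obtain x where "x \<in> X"
    using assms(3) by blast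
  then have "1 \<le> (\<Sum>A\<in>{A\<in>F. x \<in> A}. w A)"
    using assms(2) by (simp add: is_fractional_cover_def)
  also have "\<dots> \<le> sum w F"
    using assms(1,2) by (intro sum_mono2) (auto simp: is_fractional_cover_def)
  finally show ?thesis .
qed

lemma is_fractional_cover_const_1:
  assumes "finite F" and "X \<subseteq> \<Union>F"
  shows "is_fractional_cover X F (\<lambda>_. 1)"
  unfolding is_fractional_cover_def
proof (intro conjI ballI)
  fix x
  assume "x \<in> X"
  then have "{A\<in>F. x \<in> A} \<noteq> {}"
    using assms(2) by blast
  then show "1 \<le> (\<Sum>A\<in>{A\<in>F. x \<in> A}. 1::real)"
    using assms(1) by (simp add: Suc_leI card_gt_0_iff)
qed simp

lemma fractional_covering_number_ge_1:
  assumes "finite F" and "X \<subseteq> \<Union>F" and "X \<noteq> {}"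
  shows "1 \<le> fractional_covering_number X F"
  unfolding fractional_covering_number_def
  using is_fractional_cover_const_1[OF assms(1,2)] fractional_cover_total_weight_ge_1[OF assms(1) _ assms(3)]
  by (intro cInf_greatest) auto

lemma exists_fractional_cover_mult_less:
  assumes "finite F" and "X \<subseteq> \<Union>F" and "X \<noteq> {}"
    and "fractional_covering_number X F * a < b"
  shows "\<exists>w. is_fractional_cover X F w \<and> sum w F * a < b"
proof -
  define S where "S = {(\<Sum>A\<in>F. w A) | w. is_fractional_cover X F w}"
  have t: "fractional_covering_number X F = Inf S"
    by (simp add: S_def fractional_covering_number_def)
  have "S \<noteq> {}"
    using is_fractional_cover_const_1[OF assms(1,2)] by (auto simp: S_def)
  moreover have "bdd_below S"
    using fractional_cover_total_weight_ge_1[OF assms(1) _ assms(3)]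
    by (intro bdd_belowI[of _ 1]) (auto simp: S_def)
  ultimately consider "a \<le> 0" | "0 < a" "\<exists>T\<in>S. T < b / a"
    using assms(4) cInf_less_iff[of S "b / a"] by (force simp: t field_simps)
  then show ?thesis
  proof cases
    case 1
    have cover: "is_fractional_cover X F (\<lambda>_. 1)"
      using is_fractional_cover_const_1[OF assms(1,2)] .
    then have "sum (\<lambda>_. 1) F \<in> S"
      unfolding S_def by blast
    then have "sum (\<lambda>_. 1) F * a \<le> Inf S * a"
      using 1 \<open>bdd_below S\<close> by (intro mult_right_mono_neg cInf_lower)
    then show ?thesis
      using cover assms(4) t by (intro exI[of _ "\<lambda>_. 1"]) auto
  next
    case 2
    then show ?thesis
      by (auto simp: S_def field_simps)
  qed
qed

subsection \<open>The greedy potential argument\<close>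

lemma greedy_potential_step:
  fixes lam :: real
  assumes "finite F" and "is_fractional_cover X F w" and "0 < sum w F"
    and "0 \<le> lam" and "lam \<le> 1"
  shows "\<exists>A\<in>F. (\<Sum>x\<in>X. lam ^ cover_count x (add_mset A M))
                \<le> (1 - (1 - lam) / sum w F) * (\<Sum>x\<in>X. lam ^ cover_count x M)"
proof -
  let ?T = "sum w F"
  have weights_nonneg: "\<forall>A\<in>F. 0 \<le> w A"
    using assms(2) by (simp add: is_fractional_cover_def)
  have point_bound: "(\<Sum>A\<in>F. w A * (if x \<in> A then lam else 1)) \<le> ?T - (1 - lam)"
    if "x \<in> X" for x
  proof -
    have "1 \<le> (\<Sum>A\<in>{A\<in>F. x \<in> A}. w A)"
      using assms(2) that by (simp add: is_fractional_cover_def)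
    then have "(1 - lam) \<le> (1 - lam) * (\<Sum>A\<in>{A\<in>F. x \<in> A}. w A)"
      using assms(5) by (metis mult.right_neutral mult_left_mono diff_ge_0_iff_ge)
    moreover have "(\<Sum>A\<in>F. w A * (if x \<in> A then lam else 1))
        = (\<Sum>A\<in>F. w A - (1 - lam) * (if x \<in> A then w A else 0))"
      by (intro sum.cong) (auto simp: algebra_simps)
    then have "(\<Sum>A\<in>F. w A * (if x \<in> A then lam else 1))
        = ?T - (1 - lam) * (\<Sum>A\<in>{A\<in>F. x \<in> A}. w A)"
      by (simp add: sum_subtractf sum_distrib_left[symmetric] sum.inter_filter[OF assms(1)])
    ultimately show ?thesis
      by linarith
  qed
  have "(\<Sum>A\<in>F. w A * (\<Sum>x\<in>X. lam ^ cover_count x (add_mset A M)))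
      = (\<Sum>A\<in>F. \<Sum>x\<in>X. lam ^ cover_count x M * (w A * (if x \<in> A then lam else 1)))"
    unfolding sum_distrib_left by (intro sum.cong refl) (simp add: cover_count_add_mset)
  also have "\<dots> = (\<Sum>x\<in>X. lam ^ cover_count x M * (\<Sum>A\<in>F. w A * (if x \<in> A then lam else 1)))"
    by (subst sum.swap) (simp add: sum_distrib_left)
  also have "\<dots> \<le> (\<Sum>x\<in>X. lam ^ cover_count x M * (?T - (1 - lam)))"
    using point_bound assms(4) by (intro sum_mono mult_left_mono) auto
  also have "\<dots> = (\<Sum>x\<in>X. lam ^ cover_count x M) * (?T - (1 - lam))"
    by (simp add: sum_distrib_right)
  also have "\<dots> = ?T * ((1 - (1 - lam) / ?T) * (\<Sum>x\<in>X. lam ^ cover_count x M))"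
    using assms(3) by (simp add: field_simps)
  finally show ?thesis
    by (rule exists_le_weighted_average[OF assms(1) weights_nonneg assms(3)])
qed

lemma greedy_potential_bound:
  fixes lam :: real
  assumes "finite F" and "is_fractional_cover X F w" and "1 \<le> sum w F"
    and "0 \<le> lam" and "lam \<le> 1"
  shows "\<exists>M. set_mset M \<subseteq> F \<and> size M = n \<and>
    (\<Sum>x\<in>X. lam ^ cover_count x M) \<le> real (card X) * (1 - (1 - lam) / sum w F) ^ n"
proof (induction n)
  case 0
  show ?case
    by (intro exI[of _ "{#}"]) (simp add: cover_count_def)
next
  case (Suc n)
  let ?q = "1 - (1 - lam) / sum w F"
  obtain M where M: "set_mset M \<subseteq> F" "size M = n"
    "(\<Sum>x\<in>X. lam ^ cover_count x M) \<le> real (card X) * ?q ^ n"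
    using Suc.IH by blast
  obtain A where A: "A \<in> F"
    "(\<Sum>x\<in>X. lam ^ cover_count x (add_mset A M)) \<le> ?q * (\<Sum>x\<in>X. lam ^ cover_count x M)"
    using greedy_potential_step[OF assms(1,2) _ assms(4,5)] assms(3) by fastforce
  have "0 \<le> ?q"
    using assms(3,4) by (simp add: field_simps)
  note A(2)
  also have "?q * (\<Sum>x\<in>X. lam ^ cover_count x M) \<le> ?q * (real (card X) * ?q ^ n)"
    using mult_left_mono[OF M(3) \<open>0 \<le> ?q\<close>] .
  also have "\<dots> = real (card X) * ?q ^ Suc n"
    by simp
  finally have "(\<Sum>x\<in>X. lam ^ cover_count x (add_mset A M)) \<le> real (card X) * ?q ^ Suc n" .
  then show ?case
    using M A by (intro exI[of _ "add_mset A M"]) auto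
qed

lemma k_fold_covering_number_le_greedy:
  fixes lam :: real
  assumes "finite F" and "finite X" and "X \<noteq> {}" and "is_fractional_cover X F w"
    and "0 < lam" and "lam < 1"
    and "sum w F * (ln (card X) - real (k - 1) * ln lam) < (1 - lam) * N"
  shows "k_fold_covering_number k X F \<le> N"
proof -
  let ?T = "sum w F"
  let ?q = "1 - (1 - lam) / ?T"
  have T: "1 \<le> ?T"
    using fractional_cover_total_weight_ge_1 assms(1,3,4) by blast
  obtain M where M: "set_mset M \<subseteq> F" "size M = N"
    "(\<Sum>x\<in>X. lam ^ cover_count x M) \<le> real (card X) * ?q ^ N"
    using greedy_potential_bound[OF assms(1,4) T, of lam N] assms(5,6) by auto
  have "k \<le> cover_count x M" if x: "x \<in> X" for x
  proof (rule ccontr)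
    assume few: "\<not> k \<le> cover_count x M"
    have q: "0 < ?q"
      using T assms(5,6) by (simp add: field_simps)
    have "lam ^ (k - 1) \<le> lam ^ cover_count x M"
      using few assms(5,6) by (intro power_decreasing) auto
    also have "\<dots> \<le> (\<Sum>x\<in>X. lam ^ cover_count x M)"
      using x assms(2,5) by (intro member_le_sum) auto
    also have "\<dots> \<le> real (card X) * ?q ^ N"
      by (rule M(3))
    finally have "ln (lam ^ (k - 1)) \<le> ln (real (card X) * ?q ^ N)"
      using assms(5) by (intro ln_mono) auto
    also have "\<dots> = ln (card X) + N * ln ?q"
      using assms(2,3) by (simp add: card_gt_0_iff ln_mult_pos[OF _ zero_less_power[OF q]] ln_realpow)
    also have "\<dots> \<le> ln (card X) + N * (?q - 1)"
      using ln_le_minus_one[OF q] by (intro add_left_mono mult_left_mono) auto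
    finally have "N * (1 - lam) / ?T \<le> ln (card X) - real (k - 1) * ln lam"
      using assms(5) by (simp add: ln_realpow)
    then have "N * (1 - lam) \<le> (ln (card X) - real (k - 1) * ln lam) * ?T"
      using T by (simp add: pos_divide_le_eq)
    then show False
      using assms(7) by (simp add: mult.commute)
  qed
  then have "is_k_fold_cover k X F M"
    using M(1) by (simp add: is_k_fold_cover_def cover_count_def)
  then show ?thesis
    using k_fold_covering_number_le M(2) by metis
qed

lemma k_fold_covering_number_le_ceiling_of_base:
  fixes lam c :: real
  assumes "finite F" and "finite X" and "X \<noteq> {}" and "X \<subseteq> \<Union>F"
    and "0 < lam" and "lam < 1" and "0 \<le> c"
    and "ln (card X) - real (k - 1) * ln lam < (1 - lam) * c"
  shows "int (k_fold_covering_number k X F) \<le> \<lceil>fractional_covering_number X F * c\<rceil>"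
proof -
  let ?t = "fractional_covering_number X F"
  have "1 \<le> ?t"
    using fractional_covering_number_ge_1 assms(1,3,4) by blast
  then have "?t * (ln (card X) - real (k - 1) * ln lam) < ?t * ((1 - lam) * c)"
    using assms(8) by (intro mult_strict_left_mono) auto
  also have "\<dots> = (1 - lam) * (?t * c)"
    by simp
  also have "\<dots> \<le> (1 - lam) * nat \<lceil>?t * c\<rceil>"
    using assms(6) by (intro mult_left_mono) linarith+
  finally obtain w where "is_fractional_cover X F w"
    "sum w F * (ln (card X) - real (k - 1) * ln lam) < (1 - lam) * nat \<lceil>?t * c\<rceil>"
    using exists_fractional_cover_mult_less[OF assms(1,4,3)] by blast
  then have "k_fold_covering_number k X F \<le> nat \<lceil>?t * c\<rceil>"
    using k_fold_covering_number_le_greedy assms(1-3,5,6) by blast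
  moreover have "0 \<le> ?t * c"
    using \<open>1 \<le> ?t\<close> assms(7) by simp
  ultimately show ?thesis
    by (simp add: le_nat_iff)
qed

subsection \<open>Choice of the base of the potential\<close>

lemma exists_potential_base:
  fixes \<kappa> L c :: real
  assumes "1 \<le> \<kappa>" and "0 < L" and "(sqrt \<kappa> + sqrt L)\<^sup>2 \<le> c"
  shows "\<exists>lam. 0 < lam \<and> lam < 1 \<and> L - (\<kappa> - 1) * ln lam < (1 - lam) * c"
proof -
  define a b s where "a = sqrt \<kappa>" and "b = sqrt L" and "s = sqrt c"
  have a: "0 < a" "a\<^sup>2 = \<kappa>" and b: "0 < b" "b\<^sup>2 = L"
    using assms(1,2) by (auto simp: a_def b_def)
  have "0 \<le> c"
    using assms(3) by (meson order_trans zero_le_power2)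
  then have s: "s\<^sup>2 = c" and "a + b \<le> s"
    using assms(3) by (auto simp: a_def b_def s_def real_le_rsqrt)
  define lam where "lam = a / s"
  have lam: "0 < lam" "lam < 1"
    using a b \<open>a + b \<le> s\<close> by (auto simp: lam_def)
  have "1 < s / a"
    using a b \<open>a + b \<le> s\<close> by simp
  have "ln (1 / lam) \<le> 1 / lam - 1"
    using lam by (intro ln_le_minus_one) simp
  then have "1 - s / a \<le> ln lam"
    using a b \<open>a + b \<le> s\<close> by (simp add: ln_div lam_def)
  then have "(\<kappa> - 1) * (1 - s / a) \<le> (\<kappa> - 1) * ln lam"
    using assms(1) by (intro mult_left_mono) auto
  moreover have "\<kappa> * (1 - s / a) < (\<kappa> - 1) * (1 - s / a)"
    using \<open>1 < s / a\<close> by (simp only: left_diff_distrib mult_1)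
  ultimately have "\<kappa> * (1 - s / a) < (\<kappa> - 1) * ln lam"
    by linarith
  moreover have "(1 - lam) * c + \<kappa> * (1 - s / a) = (s - a)\<^sup>2"
    using a s \<open>a + b \<le> s\<close> by (simp add: lam_def field_simps power2_eq_square flip: a(2) s)
  moreover have "L \<le> (s - a)\<^sup>2"
    using b \<open>a + b \<le> s\<close> by (auto intro: power_mono)
  ultimately show ?thesis
    using lam by (intro exI[of _ lam]) auto
qed

lemma k_fold_covering_number_le_fractional_mult:
  assumes "finite F" and "finite X" and "X \<noteq> {}" and "X \<subseteq> \<Union>F" and "0 < k"
    and "(sqrt k + sqrt (ln (card X)))\<^sup>2 \<le> c"
  shows "int (k_fold_covering_number k X F) \<le> \<lceil>fractional_covering_number X F * c\<rceil>"
proof (cases "ln (card X) = 0")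
  case True
  have "1 \<le> fractional_covering_number X F"
    using fractional_covering_number_ge_1 assms(1,3,4) by blast
  then have "real k \<le> fractional_covering_number X F * c"
    using True assms(6) mult_mono[of 1 "fractional_covering_number X F" k c] by simp
  moreover obtain x where "X = {x}"
    using True assms(2,3) by (auto simp: card_gt_0_iff card_1_singleton_iff)
  then obtain A where "A \<in> F" "X \<subseteq> A"
    using assms(4) by auto
  then have "k_fold_covering_number k X F \<le> k"
    by (rule k_fold_covering_number_le_of_superset_member)
  ultimately show ?thesis
    by linarith
next
  case False
  then have "0 < ln (card X)"
    using assms(2,3) by (simp add: Suc_leI card_gt_0_iff order_less_le)
  then obtain lam where "0 < lam" "lam < 1" "ln (card X) - (real k - 1) * ln lam < (1 - lam) * c"
    using exists_potential_base[of "real k" "ln (card X)" c] assms(5,6) by auto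
  moreover have "0 \<le> c"
    using assms(6) by (meson order_trans zero_le_power2)
  ultimately show ?thesis
    using k_fold_covering_number_le_ceiling_of_base[OF assms(1-4)] assms(5)
    by (simp add: of_nat_diff)
qed

lemma sqrt_add_sqrt_squared_le:
  fixes \<kappa> L :: real
  assumes "0 \<le> \<kappa>" and "0 \<le> L"
  shows "(sqrt \<kappa> + sqrt L)\<^sup>2 \<le> \<kappa> + 3/2 * L + 3/2 * sqrt ((4 * \<kappa> + L) * L)"
proof -
  have "2 * sqrt \<kappa> * sqrt L = sqrt (4 * \<kappa> * L)"
    by (simp add: real_sqrt_mult)
  also have "\<dots> \<le> sqrt ((4 * \<kappa> + L) * L)"
    using assms by (intro real_sqrt_le_mono) (simp add: algebra_simps)
  finally have "2 * sqrt \<kappa> * sqrt L \<le> sqrt ((4 * \<kappa> + L) * L)" .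
  moreover have "(sqrt \<kappa> + sqrt L)\<^sup>2 = \<kappa> + L + 2 * sqrt \<kappa> * sqrt L"
    using assms by (simp add: power2_sum)
  moreover have "0 \<le> sqrt ((4 * \<kappa> + L) * L)"
    using assms by simp
  ultimately show ?thesis
    using assms by linarith
qed

lemma covering_factor_le_6_max:
  fixes \<kappa> L :: real
  assumes "0 \<le> \<kappa>" and "0 \<le> L"
  shows "\<kappa> + 3/2 * L + 3/2 * sqrt ((4 * \<kappa> + L) * L) \<le> 6 * max L \<kappa>"
proof -
  define m where "m = max L \<kappa>"
  have m: "\<kappa> \<le> m" "L \<le> m"
    by (auto simp: m_def)
  have "(4 * \<kappa> + L) * L \<le> 5 * m * m"
    using assms m mult_mono[of "4 * \<kappa> + L" "5 * m" L m] by simp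
  also have "\<dots> \<le> (9/4 * m)\<^sup>2"
    by (simp add: power2_eq_square)
  finally have "sqrt ((4 * \<kappa> + L) * L) \<le> 9/4 * m"
    using assms m by (intro real_le_lsqrt) auto
  then have "\<kappa> + 3/2 * L + 3/2 * sqrt ((4 * \<kappa> + L) * L) \<le> 6 * m"
    using assms m by linarith
  then show ?thesis
    by (simp add: m_def)
qed

theorem mainTheorem10:
  fixes X :: "'a set" and F :: "'a set set" and k :: nat
  assumes "finite X" and "X \<noteq> {}"
    and "F \<subseteq> Pow X" and "\<Union>F = X"
    and "k > 0"
  defines "t \<equiv> fractional_covering_number X F"
  defines "L \<equiv> ln (real (card X))"
  shows "int (k_fold_covering_number k X F)
           \<le> \<lceil>t * (real k + 3/2 * L + 3/2 * sqrt ((4 * real k + L) * L))\<rceil>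
       \<and> \<lceil>t * (real k + 3/2 * L + 3/2 * sqrt ((4 * real k + L) * L))\<rceil>
           \<le> \<lceil>6 * t * max L (real k)\<rceil>"
proof -
  define c where "c = real k + 3/2 * L + 3/2 * sqrt ((4 * real k + L) * L)"
  have finF: "finite F" and cover: "X \<subseteq> \<Union>F"
    using assms(1,3,4) by (auto intro: finite_subset)
  have t: "1 \<le> t"
    using fractional_covering_number_ge_1[OF finF cover assms(2)] by (simp add: t_def)
  have L: "0 \<le> L"
    using assms(1,2) by (simp add: L_def Suc_leI card_gt_0_iff)
  have "c \<le> 6 * max L (real k)"
    using covering_factor_le_6_max L by (simp add: c_def)
  then have "\<lceil>t * c\<rceil> \<le> \<lceil>6 * t * max L (real k)\<rceil>"
    using t by (intro ceiling_mono) (simp flip: mult.assoc)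
  moreover have "int (k_fold_covering_number k X F) \<le> \<lceil>t * c\<rceil>"
    using k_fold_covering_number_le_fractional_mult[OF finF assms(1,2) cover assms(5)]
      sqrt_add_sqrt_squared_le[of "real k" L] L by (simp add: t_def L_def c_def)
  ultimately show ?thesis
    by (simp add: c_def)
qed

end
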